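(* Let $T\in B(\mathcal{F})$ be a $k$-raising or $k$-lowering operator for some $k\ge0$. If $[T,R_j^*]\in\mathcal{S}$ for $1\le j\le d$, then $T\in\mathcal{C}=C^*(L_1,\ldots,L_d)$.
   Context: $d\ge2$; $\xi_1,\ldots,\xi_d$ is the standard orthonormal basis of $\mathbb{C}^d$. $\mathcal{F}=\bigoplus_{n\ge0}\mathcal{F}_n$ is the full Fock space, $\mathcal{F}_0=\mathbb{C}\Omega$, $\mathcal{F}_n=(\mathbb{C}^d)^{\otimes n}$ with the usual inner product. $L_j\eta=\xi_j\otimes\eta$, $R_j\eta=\eta\otimes\xi_j$ (with $L_j\Omega=R_j\Omega=\xi_j$). $T$ is $k$-raising if $T(\mathcal{F}_n)\subseteq\mathcal{F}_{n+k}$ for all $n\ge0$; $k$-lowering if $T(\mathcal{F}_n)\subseteq\mathcal{F}_{n-k}$ for $n\ge k$ and $T(\mathcal{F}_n)=\{0\}$ for $n<k$. $\mathcal{S}$ is the set of operators $S\in B(\mathcal{F})$ which are band-limited (there is $b\ge0$ with $S(\mathcal{F}_n)\subseteq\bigoplus_{|m-n|\le b}\mathcal{F}_m$ for all $n$) and summable ($\sum_{n\ge0}\|S|_{\mathcal{F}_n}\|<\infty$). *)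

theory Defs
  imports "HOL-Analysis.Analysis"
begin

text \<open>Full Fock space over C^d: the word [i1,...,in] (letters in {1..d}) stands for
  xi_i1 (x) ... (x) xi_in, the empty word for Omega.\<close>

type_synonym fock_vec = "nat list \<Rightarrow> complex"
type_synonym fock_op = "fock_vec \<Rightarrow> fock_vec"

definition fock_words :: "nat \<Rightarrow> nat list set" where
  "fock_words d = {w. set w \<subseteq> {1..d}}"

definition ell2 :: "nat \<Rightarrow> fock_vec set" where
  "ell2 d = {x. (\<forall>w. w \<notin> fock_words d \<longrightarrow> x w = 0) \<and>
                 (\<lambda>w. (cmod (x w))\<^sup>2) summable_on UNIV}"

definition fnorm :: "fock_vec \<Rightarrow> real" where
  "fnorm x = sqrt (\<Sum>\<^sub>\<infinity>w. (cmod (x w))\<^sup>2)"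

text \<open>Bounded linear operators on the Fock space (only behaviour on ell2 d matters).\<close>
definition bounded_op :: "nat \<Rightarrow> fock_op \<Rightarrow> bool" where
  "bounded_op d T \<longleftrightarrow>
     (\<forall>x\<in>ell2 d. T x \<in> ell2 d) \<and>
     (\<forall>x\<in>ell2 d. \<forall>y\<in>ell2 d. T (\<lambda>w. x w + y w) = (\<lambda>w. T x w + T y w)) \<and>
     (\<forall>c. \<forall>x\<in>ell2 d. T (\<lambda>w. c * x w) = (\<lambda>w. c * T x w)) \<and>
     (\<exists>C. \<forall>x\<in>ell2 d. fnorm (T x) \<le> C * fnorm x)"

definition deg_space :: "nat \<Rightarrow> nat \<Rightarrow> fock_vec set" where
  "deg_space d n = {x \<in> ell2 d. \<forall>w. length w \<noteq> n \<longrightarrow> x w = 0}"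

definition opnorm_on :: "fock_vec set \<Rightarrow> fock_op \<Rightarrow> real" where
  "opnorm_on A T = Sup ((\<lambda>x. fnorm (T x)) ` {x \<in> A. fnorm x \<le> 1})"

definition opnorm :: "nat \<Rightarrow> fock_op \<Rightarrow> real" where
  "opnorm d T = opnorm_on (ell2 d) T"

definition raising :: "nat \<Rightarrow> nat \<Rightarrow> fock_op \<Rightarrow> bool" where
  "raising d k T \<longleftrightarrow> (\<forall>n. \<forall>x\<in>deg_space d n. T x \<in> deg_space d (n + k))"

definition lowering :: "nat \<Rightarrow> nat \<Rightarrow> fock_op \<Rightarrow> bool" where
  "lowering d k T \<longleftrightarrow> (\<forall>n. \<forall>x\<in>deg_space d n.
      (if k \<le> n then T x \<in> deg_space d (n - k) else T x = (\<lambda>_. 0)))"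

definition band_limited :: "nat \<Rightarrow> fock_op \<Rightarrow> bool" where
  "band_limited d S \<longleftrightarrow> (\<exists>b::nat. \<forall>n. \<forall>x\<in>deg_space d n. \<forall>w.
      S x w \<noteq> 0 \<longrightarrow> length w \<le> n + b \<and> n \<le> length w + b)"

definition class_S :: "nat \<Rightarrow> fock_op \<Rightarrow> bool" where
  "class_S d S \<longleftrightarrow> bounded_op d S \<and> band_limited d S \<and>
      summable (\<lambda>n. opnorm_on (deg_space d n) S)"

definition Lop :: "nat \<Rightarrow> fock_op" where
  "Lop j x = (\<lambda>w. case w of [] \<Rightarrow> 0 | a # v \<Rightarrow> (if a = j then x v else 0))"

definition Lstar :: "nat \<Rightarrow> fock_op" where
  "Lstar j x = (\<lambda>w. x (j # w))"

definition Rop :: "nat \<Rightarrow> fock_op" where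
  "Rop j x = (\<lambda>w. if w \<noteq> [] \<and> last w = j then x (butlast w) else 0)"

definition Rstar :: "nat \<Rightarrow> fock_op" where
  "Rstar j x = (\<lambda>w. x (w @ [j]))"

text \<open>Non-commutative *-polynomials in L_1..L_d (closed under adjoints since the
  generators include the L_j^*).\<close>
inductive_set star_poly :: "nat \<Rightarrow> fock_op set" for d :: nat where
  gen_L: "j \<in> {1..d} \<Longrightarrow> Lop j \<in> star_poly d"
| gen_Lstar: "j \<in> {1..d} \<Longrightarrow> Lstar j \<in> star_poly d"
| add: "P \<in> star_poly d \<Longrightarrow> Q \<in> star_poly d \<Longrightarrow> (\<lambda>x w. P x w + Q x w) \<in> star_poly d"
| mult: "P \<in> star_poly d \<Longrightarrow> Q \<in> star_poly d \<Longrightarrow> (\<lambda>x. P (Q x)) \<in> star_poly d"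
| smult: "P \<in> star_poly d \<Longrightarrow> (\<lambda>x w. c * P x w) \<in> star_poly d"

definition cuntz_toeplitz :: "nat \<Rightarrow> fock_op set" where
  "cuntz_toeplitz d = {T. bounded_op d T \<and>
      (\<forall>\<epsilon>>0. \<exists>P\<in>star_poly d. opnorm d (\<lambda>x w. T x w - P x w) < \<epsilon>)}"

end

theory Submission
  imports Defs
begin

text \<open>A graded \<open>T\<close> is approximated by the *-polynomials \<open>P\<^sub>m\<close> made of the compression of \<open>T\<close>
  to the degrees below \<open>m\<close> and of an operator built from the words of length \<open>m\<close> that agrees
  with \<open>T\<close> on \<open>F\<^sub>m\<close> and commutes with every \<open>R\<^sub>j\<^sup>*\<close>. The error \<open>E = T - P\<^sub>m\<close> then satisfies
  \<open>E y (w j) = E (R\<^sub>j\<^sup>* y) w - [T, R\<^sub>j\<^sup>*] y w\<close>, so by induction on the degree the norm of its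
  restriction to \<open>F\<^sub>n\<close> is at most the sum, over \<open>m < l \<le> n\<close> and \<open>j\<close>, of the norms of
  \<open>[T, R\<^sub>j\<^sup>*]\<close> on \<open>F\<^sub>l\<close>. Being graded, \<open>E\<close> then has norm at most the tail of this convergent
  series, hence \<open>P\<^sub>m \<rightarrow> T\<close> in norm.\<close>

subsection \<open>Words of fixed length and the degree decomposition of \<open>\<ell>\<^sup>2\<close>\<close>

definition words_of_len :: "nat \<Rightarrow> nat \<Rightarrow> nat list set" where
  "words_of_len d n = {w. length w = n \<and> set w \<subseteq> {1..d}}"

lemma finite_words_of_len: "finite (words_of_len d n)"
proof -
  have "words_of_len d n = {w. set w \<subseteq> {1..d} \<and> length w = n}"
    unfolding words_of_len_def by auto
  thus ?thesis using finite_lists_length_eq[of "{1..d}" n] by simp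
qed

lemma words_of_len_subset_fock_words: "words_of_len d n \<subseteq> fock_words d"
  unfolding words_of_len_def fock_words_def by auto

lemma fock_words_in_words_of_len: "w \<in> fock_words d \<Longrightarrow> w \<in> words_of_len d (length w)"
  unfolding words_of_len_def fock_words_def by auto

lemma has_sum_by_word_length:
  fixes f :: "nat list \<Rightarrow> real"
  assumes vanish: "\<And>w. w \<notin> fock_words d \<Longrightarrow> f w = 0" and summable: "f summable_on UNIV"
  shows "(\<lambda>n. sum f (words_of_len d n)) sums infsum f UNIV"
proof -
  let ?S = "SIGMA n:(UNIV::nat set). words_of_len d n"
  have "snd ` ?S = fock_words d"
    using words_of_len_subset_fock_words fock_words_in_words_of_len by force
  moreover have "(f has_sum infsum f UNIV) (fock_words d)"
    using has_sum_infsum[OF summable] vanish has_sum_cong_neutral[of "fock_words d" UNIV f f]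
    by auto
  moreover have "inj_on snd ?S" unfolding inj_on_def words_of_len_def by auto
  ultimately have "((f \<circ> snd) has_sum infsum f UNIV) ?S"
    using has_sum_reindex by metis
  hence "((\<lambda>n. sum f (words_of_len d n)) has_sum infsum f UNIV) UNIV"
    by (rule has_sum_SigmaD) (auto simp: finite_words_of_len)
  thus ?thesis by (rule has_sum_imp_sums)
qed

lemma summable_on_if_summable_by_word_length:
  fixes f :: "nat list \<Rightarrow> real"
  assumes vanish: "\<And>w. w \<notin> fock_words d \<Longrightarrow> f w = 0" and nonneg: "\<And>w. f w \<ge> 0"
    and summable: "summable (\<lambda>n. sum f (words_of_len d n))"
  shows "f summable_on UNIV"
proof (rule nonneg_bdd_above_summable_on)
  show "bdd_above (sum f ` {F. F \<subseteq> UNIV \<and> finite F})"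
  proof (rule bdd_aboveI2)
    fix F :: "nat list set" assume "F \<in> {F. F \<subseteq> UNIV \<and> finite F}"
    hence fin: "finite F" by auto
    define N where "N = Suc (Max (length ` F))"
    have "sum f F = sum f (F \<inter> fock_words d)"
      using fin vanish by (intro sum.mono_neutral_right) auto
    also have "\<dots> \<le> sum f (\<Union>n<N. words_of_len d n)"
    proof (rule sum_mono2)
      show "F \<inter> fock_words d \<subseteq> (\<Union>n<N. words_of_len d n)"
        using fin fock_words_in_words_of_len
        by (fastforce simp: N_def le_imp_less_Suc)
    qed (use nonneg finite_words_of_len in auto)
    also have "\<dots> = (\<Sum>n<N. sum f (words_of_len d n))"
      by (rule sum.UNION_disjoint) (simp_all add: finite_words_of_len, auto simp: words_of_len_def)
    also have "\<dots> \<le> (\<Sum>n. sum f (words_of_len d n))"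
      using summable nonneg by (intro sum_le_suminf) (auto intro: sum_nonneg)
    finally show "sum f F \<le> (\<Sum>n. sum f (words_of_len d n))" .
  qed
qed (use nonneg in auto)

definition deg_sqnorm :: "nat \<Rightarrow> fock_vec \<Rightarrow> nat \<Rightarrow> real" where
  "deg_sqnorm d x n = (\<Sum>w\<in>words_of_len d n. (cmod (x w))\<^sup>2)"

lemma deg_sqnorm_nonneg: "deg_sqnorm d x n \<ge> 0"
  unfolding deg_sqnorm_def by (auto intro: sum_nonneg)

lemma fnorm_nonneg: "fnorm x \<ge> 0"
  unfolding fnorm_def by (simp add: infsum_nonneg)

lemma fnorm_squared: "(fnorm x)\<^sup>2 = (\<Sum>\<^sub>\<infinity>w. (cmod (x w))\<^sup>2)"
  unfolding fnorm_def by (simp add: infsum_nonneg)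

lemma deg_sqnorm_sums: "x \<in> ell2 d \<Longrightarrow> deg_sqnorm d x sums (fnorm x)\<^sup>2"
  unfolding fnorm_squared deg_sqnorm_def
  by (rule has_sum_by_word_length) (auto simp: ell2_def)

lemma fnorm_squared_le_suminf:
  assumes vanish: "\<And>w. w \<notin> fock_words d \<Longrightarrow> x w = 0"
    and le: "\<And>n. deg_sqnorm d x n \<le> g n" and "summable g"
  shows "(fnorm x)\<^sup>2 \<le> suminf g"
proof -
  let ?f = "\<lambda>w. (cmod (x w))\<^sup>2"
  have summable_deg: "summable (deg_sqnorm d x)"
    by (rule summable_comparison_test[of _ g]) (use le deg_sqnorm_nonneg assms(3) in auto)
  have "?f summable_on UNIV"
    by (rule summable_on_if_summable_by_word_length[of d])
      (use vanish summable_deg in \<open>auto simp: deg_sqnorm_def[abs_def]\<close>)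
  hence "deg_sqnorm d x sums (fnorm x)\<^sup>2"
    unfolding deg_sqnorm_def[abs_def] fnorm_squared
    by (rule has_sum_by_word_length[rotated]) (use vanish in auto)
  thus ?thesis
    using suminf_le[OF le summable_deg assms(3)] by (simp add: sums_iff)
qed

lemma fnorm_finite_support:
  assumes "finite A" "\<And>w. w \<notin> A \<Longrightarrow> x w = 0"
  shows "fnorm x = sqrt (\<Sum>w\<in>A. (cmod (x w))\<^sup>2)"
proof -
  have "(\<Sum>\<^sub>\<infinity>w. (cmod (x w))\<^sup>2) = (\<Sum>\<^sub>\<infinity>w\<in>A. (cmod (x w))\<^sup>2)"
    by (rule infsum_cong_neutral) (use assms in auto)
  thus ?thesis unfolding fnorm_def using assms by simp
qed

lemma fnorm_zero [simp]: "fnorm (\<lambda>w. 0) = 0"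
  using fnorm_finite_support[of "{}" "\<lambda>w. 0"] by simp

lemma sum_squares_le_fnorm_squared:
  assumes "x \<in> ell2 d" "finite A"
  shows "(\<Sum>w\<in>A. (cmod (x w))\<^sup>2) \<le> (fnorm x)\<^sup>2"
  unfolding fnorm_squared
  by (rule finite_sum_le_infsum) (use assms in \<open>auto simp: ell2_def\<close>)

lemma deg_sqnorm_le_fnorm_squared: "x \<in> ell2 d \<Longrightarrow> deg_sqnorm d x n \<le> (fnorm x)\<^sup>2"
  unfolding deg_sqnorm_def
  by (rule sum_squares_le_fnorm_squared) (auto simp: finite_words_of_len)

lemma norm_le_fnorm:
  assumes "x \<in> ell2 d" shows "cmod (x w) \<le> fnorm x"
  using sum_squares_le_fnorm_squared[OF assms, of "{w}"] fnorm_nonneg[of x]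
  by (simp add: abs_le_square_iff)

lemma ell2_finite_support:
  assumes "finite A" "A \<subseteq> fock_words d" "\<And>w. w \<notin> A \<Longrightarrow> x w = 0"
  shows "x \<in> ell2 d"
proof -
  have "(\<lambda>w. (cmod (x w))\<^sup>2) summable_on A" using assms(1) by simp
  hence "(\<lambda>w. (cmod (x w))\<^sup>2) summable_on UNIV"
    by (rule summable_on_cong_neutral[THEN iffD1, rotated -1]) (use assms in auto)
  thus ?thesis using assms unfolding ell2_def by auto
qed

lemma ell2_zero: "(\<lambda>w. 0) \<in> ell2 d"
  by (rule ell2_finite_support[of "{}"]) auto

lemma ell2_add:
  assumes "x \<in> ell2 d" "y \<in> ell2 d" shows "(\<lambda>w. x w + y w) \<in> ell2 d"
proof -
  have "(\<lambda>w. 2 * (cmod (x w))\<^sup>2 + 2 * (cmod (y w))\<^sup>2) summable_on UNIV"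
    using assms by (intro summable_on_add summable_on_cmult_right) (auto simp: ell2_def)
  moreover have "(cmod (x w + y w))\<^sup>2 \<le> 2 * (cmod (x w))\<^sup>2 + 2 * (cmod (y w))\<^sup>2" for w
  proof -
    have "(cmod (x w + y w))\<^sup>2 \<le> (cmod (x w) + cmod (y w))\<^sup>2"
      by (simp add: power_mono norm_triangle_ineq)
    also have "\<dots> \<le> 2 * (cmod (x w))\<^sup>2 + 2 * (cmod (y w))\<^sup>2"
      by (smt (verit) sum_squares_ge_zero power2_sum zero_le_power2 power2_diff)
    finally show ?thesis .
  qed
  ultimately have "(\<lambda>w. (cmod (x w + y w))\<^sup>2) summable_on UNIV"
    by (rule summable_on_comparison_test) auto
  thus ?thesis using assms by (auto simp: ell2_def)
qed

lemma ell2_scale: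
  assumes "x \<in> ell2 d" shows "(\<lambda>w. c * x w) \<in> ell2 d"
proof -
  have "(\<lambda>w. (cmod c)\<^sup>2 * (cmod (x w))\<^sup>2) summable_on UNIV"
    using assms by (intro summable_on_cmult_right) (auto simp: ell2_def)
  thus ?thesis using assms by (auto simp: ell2_def norm_mult power_mult_distrib)
qed

lemma ell2_diff:
  assumes "x \<in> ell2 d" "y \<in> ell2 d" shows "(\<lambda>w. x w - y w) \<in> ell2 d"
  using ell2_add[OF assms(1) ell2_scale[OF assms(2), of "-1"]] by simp

lemma ell2_sum:
  "finite I \<Longrightarrow> (\<And>i. i \<in> I \<Longrightarrow> x i \<in> ell2 d) \<Longrightarrow> (\<lambda>w. \<Sum>i\<in>I. x i w) \<in> ell2 d"
  by (induction I rule: finite_induct) (auto intro: ell2_zero ell2_add)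

lemma ell2_restrict:
  assumes "x \<in> ell2 d" shows "(\<lambda>w. if P w then x w else 0) \<in> ell2 d"
proof -
  have "(\<lambda>w. (cmod (if P w then x w else 0))\<^sup>2) summable_on UNIV"
    by (rule summable_on_comparison_test[of "\<lambda>w. (cmod (x w))\<^sup>2"])
      (use assms in \<open>auto simp: ell2_def\<close>)
  thus ?thesis using assms by (auto simp: ell2_def)
qed

lemma fnorm_scale: "fnorm (\<lambda>w. c * x w) = cmod c * fnorm x"
proof -
  have "(\<Sum>\<^sub>\<infinity>w. (cmod (c * x w))\<^sup>2) = (cmod c)\<^sup>2 * (\<Sum>\<^sub>\<infinity>w. (cmod (x w))\<^sup>2)"
    unfolding norm_mult power_mult_distrib by (rule infsum_cmult_right')
  thus ?thesis unfolding fnorm_def by (simp add: real_sqrt_mult)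
qed

lemma fnorm_tail_tendsto_zero:
  assumes x: "x \<in> ell2 d"
  shows "(\<lambda>N. fnorm (\<lambda>w. if N \<le> length w then x w else 0)) \<longlonglongrightarrow> 0"
proof -
  define s where "s = (fnorm x)\<^sup>2"
  have x_sums: "deg_sqnorm d x sums s" unfolding s_def by (rule deg_sqnorm_sums[OF x])
  have tail: "(fnorm (\<lambda>w. if N \<le> length w then x w else 0))\<^sup>2 = s - (\<Sum>n<N. deg_sqnorm d x n)"
    for N
  proof -
    let ?t = "\<lambda>w. if N \<le> length w then x w else 0"
    have t_deg: "deg_sqnorm d ?t n = (if N \<le> n then deg_sqnorm d x n else 0)" for n
      unfolding deg_sqnorm_def words_of_len_def by (auto intro!: sum.cong sum.neutral)
    have "(\<lambda>n. deg_sqnorm d x (n + N)) sums (s - (\<Sum>n<N. deg_sqnorm d x n))"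
      by (rule sums_split_initial_segment[OF x_sums])
    hence "(\<lambda>n. deg_sqnorm d ?t (n + N)) sums (s - (\<Sum>n<N. deg_sqnorm d x n))"
      by (simp add: t_deg)
    hence "deg_sqnorm d ?t sums (s - (\<Sum>n<N. deg_sqnorm d x n) + (\<Sum>n<N. deg_sqnorm d ?t n))"
      by (rule sums_iff_shift[THEN iffD1])
    moreover have "(\<Sum>n<N. deg_sqnorm d ?t n) = 0" by (simp add: t_deg)
    ultimately have "deg_sqnorm d ?t sums (s - (\<Sum>n<N. deg_sqnorm d x n))" by simp
    moreover have "deg_sqnorm d ?t sums (fnorm ?t)\<^sup>2"
      by (rule deg_sqnorm_sums[OF ell2_restrict[OF x]])
    ultimately show ?thesis using sums_unique2 by blast
  qed
  have "(\<lambda>N. s - (\<Sum>n<N. deg_sqnorm d x n)) \<longlonglongrightarrow> s - s"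
    using x_sums by (intro tendsto_intros) (simp add: sums_def)
  hence "(\<lambda>N. sqrt ((fnorm (\<lambda>w. if N \<le> length w then x w else 0))\<^sup>2)) \<longlonglongrightarrow> sqrt 0"
    unfolding tail by (intro tendsto_intros) simp
  thus ?thesis using fnorm_nonneg by simp
qed

lemma deg_sqnorm_Suc:
  "deg_sqnorm d x (Suc n) = (\<Sum>i\<in>{1..d}. deg_sqnorm d (\<lambda>w. x (w @ [i])) n)"
proof -
  let ?snoc = "\<lambda>(i::nat, w::nat list). w @ [i]"
  have inj: "inj_on ?snoc ({1..d} \<times> words_of_len d n)" by (auto simp: inj_on_def)
  have "words_of_len d (Suc n) \<subseteq> ?snoc ` ({1..d} \<times> words_of_len d n)"
  proof
    fix v assume v: "v \<in> words_of_len d (Suc n)"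
    hence "v \<noteq> []" by (auto simp: words_of_len_def)
    hence "v = ?snoc (last v, butlast v)" by simp
    moreover have "(last v, butlast v) \<in> {1..d} \<times> words_of_len d n"
      using v last_in_set[OF \<open>v \<noteq> []\<close>] by (auto simp: words_of_len_def dest: in_set_butlastD)
    ultimately show "v \<in> ?snoc ` ({1..d} \<times> words_of_len d n)" by blast
  qed
  hence img: "?snoc ` ({1..d} \<times> words_of_len d n) = words_of_len d (Suc n)"
    by (auto simp: words_of_len_def)
  have "deg_sqnorm d x (Suc n) = (\<Sum>p\<in>{1..d} \<times> words_of_len d n. (cmod (x (?snoc p)))\<^sup>2)"
    unfolding deg_sqnorm_def img[symmetric] sum.reindex[OF inj] by (simp add: case_prod_beta)
  also have "\<dots> = (\<Sum>i\<in>{1..d}. \<Sum>w\<in>words_of_len d n. (cmod (x (w @ [i])))\<^sup>2)"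
    by (subst sum.cartesian_product) (auto intro!: sum.cong)
  finally show ?thesis unfolding deg_sqnorm_def .
qed

lemma sqrt_double_sum_diff_le:
  fixes f g :: "'i \<Rightarrow> 'j \<Rightarrow> complex"
  shows "sqrt (\<Sum>i\<in>I. \<Sum>w\<in>B. (cmod (f i w - g i w))\<^sup>2)
           \<le> sqrt (\<Sum>i\<in>I. \<Sum>w\<in>B. (cmod (f i w))\<^sup>2) + sqrt (\<Sum>i\<in>I. \<Sum>w\<in>B. (cmod (g i w))\<^sup>2)"
proof -
  have L2: "sqrt (\<Sum>i\<in>I. \<Sum>w\<in>B. (h i w)\<^sup>2) = L2_set (\<lambda>p. h (fst p) (snd p)) (I \<times> B)"
    for h :: "'i \<Rightarrow> 'j \<Rightarrow> real"
    unfolding L2_set_def by (subst sum.cartesian_product) (simp add: case_prod_beta)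
  have "L2_set (\<lambda>p. cmod (f (fst p) (snd p) - g (fst p) (snd p))) (I \<times> B)
      \<le> L2_set (\<lambda>p. cmod (f (fst p) (snd p)) + cmod (g (fst p) (snd p))) (I \<times> B)"
    by (rule L2_set_mono) (auto simp: norm_triangle_ineq4)
  also have "\<dots> \<le> L2_set (\<lambda>p. cmod (f (fst p) (snd p))) (I \<times> B)
                 + L2_set (\<lambda>p. cmod (g (fst p) (snd p))) (I \<times> B)"
    by (rule L2_set_triangle_ineq)
  finally show ?thesis unfolding L2 .
qed

subsection \<open>Homogeneous vectors and bounded operators\<close>

definition basis_vec :: "nat list \<Rightarrow> fock_vec" where
  "basis_vec u = (\<lambda>w. if w = u then 1 else 0)"

definition deg_part :: "nat \<Rightarrow> fock_vec \<Rightarrow> fock_vec" where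
  "deg_part n x = (\<lambda>w. if length w = n then x w else 0)"

lemma deg_space_intro:
  assumes "\<And>w. w \<notin> words_of_len d n \<Longrightarrow> x w = 0" shows "x \<in> deg_space d n"
proof -
  have "x \<in> ell2 d"
    by (rule ell2_finite_support[OF finite_words_of_len words_of_len_subset_fock_words assms])
  thus ?thesis using assms unfolding deg_space_def words_of_len_def by auto
qed

lemma deg_space_vanishes:
  assumes "x \<in> deg_space d n" "w \<notin> words_of_len d n" shows "x w = 0"
  using assms unfolding deg_space_def ell2_def words_of_len_def fock_words_def by auto

lemma fnorm_deg_space: "y \<in> deg_space d n \<Longrightarrow> fnorm y = sqrt (deg_sqnorm d y n)"
  unfolding deg_sqnorm_def
  by (rule fnorm_finite_support) (auto simp: finite_words_of_len deg_space_vanishes)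

lemma zero_in_deg_space: "(\<lambda>w. 0) \<in> deg_space d n"
  unfolding deg_space_def using ell2_zero by auto

lemma deg_space_scale: "y \<in> deg_space d n \<Longrightarrow> (\<lambda>w. c * y w) \<in> deg_space d n"
  unfolding deg_space_def using ell2_scale by auto

lemma basis_vec_in_deg_space: "u \<in> words_of_len d n \<Longrightarrow> basis_vec u \<in> deg_space d n"
  by (rule deg_space_intro) (auto simp: basis_vec_def)

lemma deg_part_in_deg_space: "x \<in> ell2 d \<Longrightarrow> deg_part n x \<in> deg_space d n"
  unfolding deg_part_def deg_space_def using ell2_restrict by auto

lemma deg_space_basis_expansion:
  assumes "y \<in> deg_space d n" shows "y = (\<lambda>w. \<Sum>u\<in>words_of_len d n. y u * basis_vec u w)"
proof
  fix w
  show "y w = (\<Sum>u\<in>words_of_len d n. y u * basis_vec u w)"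
  proof (cases "w \<in> words_of_len d n")
    case True
    thus ?thesis by (simp add: basis_vec_def finite_words_of_len if_distrib cong: if_cong)
  next
    case False
    thus ?thesis
      using deg_space_vanishes[OF assms False] by (auto simp: basis_vec_def intro!: sum.neutral)
  qed
qed

lemma Rstar_in_deg_space:
  assumes y: "y \<in> deg_space d (Suc n)" and i: "i \<in> {1..d}"
  shows "Rstar i y \<in> deg_space d n"
proof (rule deg_space_intro)
  fix w assume "w \<notin> words_of_len d n"
  hence "w @ [i] \<notin> words_of_len d (Suc n)" using i by (auto simp: words_of_len_def)
  thus "Rstar i y w = 0" using deg_space_vanishes[OF y] by (simp add: Rstar_def)
qed

lemma sqrt_sum_deg_sqnorm_Rstar_le:
  assumes y: "y \<in> deg_space d (Suc n)" and "B \<ge> 0"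
    and bound: "\<And>z. z \<in> deg_space d n \<Longrightarrow> sqrt (deg_sqnorm d (F z) l) \<le> B * fnorm z"
  shows "sqrt (\<Sum>i\<in>{1..d}. deg_sqnorm d (F (Rstar i y)) l) \<le> B * fnorm y"
proof -
  have "deg_sqnorm d (F (Rstar i y)) l \<le> B\<^sup>2 * deg_sqnorm d (Rstar i y) n" if i: "i \<in> {1..d}" for i
  proof -
    have z: "Rstar i y \<in> deg_space d n" by (rule Rstar_in_deg_space[OF y i])
    have "deg_sqnorm d (F (Rstar i y)) l \<le> (B * fnorm (Rstar i y))\<^sup>2"
      using power_mono[OF bound[OF z], of 2] by (simp add: deg_sqnorm_nonneg)
    thus ?thesis by (simp add: fnorm_deg_space[OF z] power_mult_distrib deg_sqnorm_nonneg)
  qed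
  hence "(\<Sum>i\<in>{1..d}. deg_sqnorm d (F (Rstar i y)) l)
           \<le> (\<Sum>i\<in>{1..d}. B\<^sup>2 * deg_sqnorm d (Rstar i y) n)"
    by (rule sum_mono)
  also have "\<dots> = B\<^sup>2 * deg_sqnorm d y (Suc n)"
    by (simp add: deg_sqnorm_Suc[of d y n] sum_distrib_left Rstar_def)
  finally have "sqrt (\<Sum>i\<in>{1..d}. deg_sqnorm d (F (Rstar i y)) l) \<le> sqrt (B\<^sup>2 * deg_sqnorm d y (Suc n))"
    by (rule real_sqrt_le_mono)
  thus ?thesis using \<open>B \<ge> 0\<close> by (simp add: real_sqrt_mult fnorm_deg_space[OF y])
qed

lemma
  assumes "bounded_op d S"
  shows bounded_op_ell2: "x \<in> ell2 d \<Longrightarrow> S x \<in> ell2 d"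
    and bounded_op_add:
      "x \<in> ell2 d \<Longrightarrow> y \<in> ell2 d \<Longrightarrow> S (\<lambda>w. x w + y w) = (\<lambda>w. S x w + S y w)"
    and bounded_op_scale: "x \<in> ell2 d \<Longrightarrow> S (\<lambda>w. c * x w) = (\<lambda>w. c * S x w)"
  using assms unfolding bounded_op_def by auto

lemma bounded_op_zero: "bounded_op d S \<Longrightarrow> S (\<lambda>w. 0) = (\<lambda>w. 0)"
  using bounded_op_scale[OF _ ell2_zero, of d S 0] by simp

lemma bounded_opE:
  assumes "bounded_op d S"
  obtains C :: real where "C \<ge> 0" "\<And>x. x \<in> ell2 d \<Longrightarrow> fnorm (S x) \<le> C * fnorm x"
proof -
  obtain C where C: "\<And>x. x \<in> ell2 d \<Longrightarrow> fnorm (S x) \<le> C * fnorm x"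
    using assms unfolding bounded_op_def by blast
  have "fnorm (S x) \<le> max C 0 * fnorm x" if "x \<in> ell2 d" for x
    using C[OF that] mult_right_mono[of C "max C 0" "fnorm x"] fnorm_nonneg[of x] by linarith
  thus ?thesis using that[of "max C 0"] by auto
qed

lemma bounded_op_sum:
  assumes S: "bounded_op d S"
  shows "finite I \<Longrightarrow> (\<And>i. i \<in> I \<Longrightarrow> x i \<in> ell2 d) \<Longrightarrow>
           S (\<lambda>w. \<Sum>i\<in>I. x i w) = (\<lambda>w. \<Sum>i\<in>I. S (x i) w)"
proof (induction I rule: finite_induct)
  case empty
  thus ?case using bounded_op_zero[OF S] by simp
next
  case (insert a I)
  thus ?case using bounded_op_add[OF S] ell2_sum[of I x d] by simp
qed

lemma bounded_op_deg_space_expansion: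
  assumes S: "bounded_op d S" and y: "y \<in> deg_space d n"
  shows "S y w = (\<Sum>u\<in>words_of_len d n. y u * S (basis_vec u) w)"
proof -
  have basis: "basis_vec u \<in> ell2 d" if "u \<in> words_of_len d n" for u
    using basis_vec_in_deg_space[OF that] by (simp add: deg_space_def)
  have "S y = S (\<lambda>w. \<Sum>u\<in>words_of_len d n. y u * basis_vec u w)"
    using deg_space_basis_expansion[OF y] by simp
  also have "\<dots> = (\<lambda>w. \<Sum>u\<in>words_of_len d n. S (\<lambda>w. y u * basis_vec u w) w)"
    by (rule bounded_op_sum[OF S]) (auto simp: finite_words_of_len intro: ell2_scale basis)
  finally show ?thesis using bounded_op_scale[OF S basis] by simp
qed

text \<open>\<open>S z w\<close> is \<open>S\<close> applied to the part of \<open>z\<close> above any degree \<open>N\<close>, whose norm tends to zero.\<close>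

lemma bounded_op_eq_zero_if_deg_parts:
  assumes S: "bounded_op d S" and z: "z \<in> ell2 d" and parts: "\<And>j. S (deg_part j z) w = 0"
  shows "S z w = 0"
proof -
  obtain C where C: "\<And>x. x \<in> ell2 d \<Longrightarrow> fnorm (S x) \<le> C * fnorm x"
    using bounded_opE[OF S] by blast
  define tail where "tail N = (\<lambda>w. if N \<le> length w then z w else 0)" for N
  have part: "deg_part j z \<in> ell2 d" for j
    using deg_part_in_deg_space[OF z] by (simp add: deg_space_def)
  have tail: "tail N \<in> ell2 d" for N unfolding tail_def by (rule ell2_restrict[OF z])
  have Sz_bound: "cmod (S z w) \<le> C * fnorm (tail N)" for N
  proof -
    have parts_sum: "(\<lambda>w. \<Sum>j<N. deg_part j z w) \<in> ell2 d"
      by (rule ell2_sum) (use part in auto)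
    have "z = (\<lambda>w. (\<Sum>j<N. deg_part j z w) + tail N w)"
      by (auto simp: tail_def deg_part_def if_distrib cong: if_cong)
    hence "S z = S (\<lambda>w. (\<Sum>j<N. deg_part j z w) + tail N w)" by (rule arg_cong)
    also have "\<dots> = (\<lambda>w. S (\<lambda>w. \<Sum>j<N. deg_part j z w) w + S (tail N) w)"
      by (rule bounded_op_add[OF S parts_sum tail])
    also have "S (\<lambda>w. \<Sum>j<N. deg_part j z w) = (\<lambda>w. \<Sum>j<N. S (deg_part j z) w)"
      by (rule bounded_op_sum[OF S]) (use part in auto)
    finally have "S z w = S (tail N) w" using parts by simp
    hence "cmod (S z w) \<le> fnorm (S (tail N))"
      using norm_le_fnorm[OF bounded_op_ell2[OF S tail]] by simp
    also have "\<dots> \<le> C * fnorm (tail N)" by (rule C[OF tail])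
    finally show ?thesis .
  qed
  have "(\<lambda>N. C * fnorm (tail N)) \<longlonglongrightarrow> C * 0"
    using fnorm_tail_tendsto_zero[OF z] unfolding tail_def by (intro tendsto_intros)
  hence "cmod (S z w) \<le> C * 0" by (rule LIMSEQ_le_const) (use Sz_bound in auto)
  thus ?thesis by simp
qed

lemma bounded_op_eq_on_deg_part:
  assumes S: "bounded_op d S" and x: "x \<in> ell2 d"
    and kills: "\<And>j y. j \<noteq> n \<Longrightarrow> y \<in> deg_space d j \<Longrightarrow> S y w = 0"
  shows "S x w = S (deg_part n x) w"
proof -
  define z where "z = (\<lambda>w. x w - deg_part n x w)"
  have x_n: "deg_part n x \<in> ell2 d" using deg_part_in_deg_space[OF x] by (simp add: deg_space_def)
  have z: "z \<in> ell2 d" unfolding z_def by (rule ell2_diff[OF x x_n])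
  have "S (deg_part j z) w = 0" for j
  proof (cases "j = n")
    case True
    hence "deg_part j z = (\<lambda>w. 0)" unfolding z_def deg_part_def by auto
    thus ?thesis using bounded_op_zero[OF S] by simp
  qed (use kills deg_part_in_deg_space[OF z] in auto)
  hence "S z w = 0" by (rule bounded_op_eq_zero_if_deg_parts[OF S z])
  moreover have "S x = S (\<lambda>w. deg_part n x w + z w)" unfolding z_def by simp
  moreover have "\<dots> = (\<lambda>w. S (deg_part n x) w + S z w)" by (rule bounded_op_add[OF S x_n z])
  ultimately show ?thesis by simp
qed

lemma bdd_above_opnorm_on:
  assumes "bounded_op d S" "A \<subseteq> ell2 d"
  shows "bdd_above ((\<lambda>x. fnorm (S x)) ` {x \<in> A. fnorm x \<le> 1})"
proof -
  obtain C where C: "C \<ge> 0" "\<And>x. x \<in> ell2 d \<Longrightarrow> fnorm (S x) \<le> C * fnorm x"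
    using bounded_opE[OF assms(1)] by blast
  show ?thesis
  proof (rule bdd_aboveI2)
    fix x assume "x \<in> {x \<in> A. fnorm x \<le> 1}"
    thus "fnorm (S x) \<le> C"
      using C(2)[of x] mult_left_mono[of "fnorm x" 1 C] C(1) assms(2) by force
  qed
qed

lemma opnorm_on_deg_space_nonneg:
  assumes "bounded_op d S" shows "opnorm_on (deg_space d n) S \<ge> 0"
proof -
  have "fnorm (S (\<lambda>w. 0)) \<le> opnorm_on (deg_space d n) S"
    unfolding opnorm_on_def
    by (rule cSup_upper) (use zero_in_deg_space bdd_above_opnorm_on[OF assms, of "deg_space d n"]
        in \<open>auto simp: deg_space_def\<close>)
  thus ?thesis using fnorm_nonneg[of "S (\<lambda>w. 0)"] by linarith
qed

lemma fnorm_le_opnorm_on_deg_space: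
  assumes S: "bounded_op d S" and y: "y \<in> deg_space d n"
  shows "fnorm (S y) \<le> opnorm_on (deg_space d n) S * fnorm y"
proof (cases "fnorm y = 0")
  case True
  obtain C where "\<And>x. x \<in> ell2 d \<Longrightarrow> fnorm (S x) \<le> C * fnorm x"
    using bounded_opE[OF S] by blast
  hence "fnorm (S y) \<le> 0" using True y by (force simp: deg_space_def)
  thus ?thesis using True fnorm_nonneg[of "S y"] by simp
next
  case False
  hence pos: "fnorm y > 0" using fnorm_nonneg[of y] by simp
  define c where "c = complex_of_real (inverse (fnorm y))"
  have c: "cmod c = inverse (fnorm y)"
    unfolding c_def using pos by (simp del: of_real_inverse add: of_real_inverse[symmetric])
  have "S (\<lambda>w. c * y w) = (\<lambda>w. c * S y w)"
    using S y by (simp add: bounded_op_def deg_space_def)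
  moreover have "fnorm (S (\<lambda>w. c * y w)) \<le> opnorm_on (deg_space d n) S"
    unfolding opnorm_on_def
    by (rule cSup_upper)
      (use deg_space_scale[OF y] pos c bdd_above_opnorm_on[OF S, of "deg_space d n"]
        in \<open>auto simp: deg_space_def fnorm_scale\<close>)
  ultimately have "inverse (fnorm y) * fnorm (S y) \<le> opnorm_on (deg_space d n) S"
    by (simp add: fnorm_scale c)
  thus ?thesis using pos by (simp add: field_simps)
qed

subsection \<open>Some *-polynomials in the left creation operators\<close>

definition Lword :: "nat list \<Rightarrow> fock_op" where
  "Lword a x = (\<lambda>w. if take (length a) w = a then x (drop (length a) w) else 0)"

definition Lword_star :: "nat list \<Rightarrow> fock_op" where
  "Lword_star b x = (\<lambda>w. x (b @ w))"

definition vacuum_proj :: "nat \<Rightarrow> fock_op" where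
  "vacuum_proj d x = (\<lambda>w. x w - (\<Sum>j\<in>{1..d}. Lop j (Lstar j x) w))"

lemma star_poly_id:
  assumes "1 \<le> d" shows "(\<lambda>x. x) \<in> star_poly d"
proof -
  have "(\<lambda>x. Lstar 1 (Lop 1 x)) \<in> star_poly d"
    using assms by (intro star_poly.mult[OF star_poly.gen_Lstar star_poly.gen_L]) auto
  moreover have "(\<lambda>x. Lstar 1 (Lop 1 x)) = (\<lambda>x. x)"
    by (auto simp: Lstar_def Lop_def)
  ultimately show ?thesis by simp
qed

lemma star_poly_zero:
  assumes "1 \<le> d" shows "(\<lambda>x w. 0) \<in> star_poly d"
  using star_poly.smult[OF star_poly_id[OF assms], of 0] by simp

lemma star_poly_sum:
  assumes "1 \<le> d"
  shows "finite I \<Longrightarrow> (\<And>i. i \<in> I \<Longrightarrow> P i \<in> star_poly d) \<Longrightarrow>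
           (\<lambda>x w. \<Sum>i\<in>I. P i x w) \<in> star_poly d"
proof (induction I rule: finite_induct)
  case empty
  thus ?case using star_poly_zero[OF assms] by simp
next
  case (insert a I)
  hence "(\<lambda>x w. P a x w + (\<Sum>i\<in>I. P i x w)) \<in> star_poly d"
    using star_poly.add[of "P a" d "\<lambda>x w. \<Sum>i\<in>I. P i x w"] by simp
  thus ?case using insert by simp
qed

lemma star_poly_Lword:
  assumes "1 \<le> d" shows "set a \<subseteq> {1..d} \<Longrightarrow> Lword a \<in> star_poly d"
proof (induction a)
  case Nil
  have "Lword [] = (\<lambda>x. x)" by (auto simp: Lword_def)
  thus ?case using star_poly_id[OF assms] by simp
next
  case (Cons j a)
  have "(\<lambda>x. Lop j (Lword a x)) \<in> star_poly d"
    using Cons by (intro star_poly.mult[OF star_poly.gen_L]) auto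
  moreover have "(\<lambda>x. Lop j (Lword a x)) = Lword (j # a)"
    by (auto simp: Lword_def Lop_def fun_eq_iff split: list.split)
  ultimately show ?case by simp
qed

lemma star_poly_Lword_star:
  assumes "1 \<le> d" shows "set b \<subseteq> {1..d} \<Longrightarrow> Lword_star b \<in> star_poly d"
proof (induction b)
  case Nil
  have "Lword_star [] = (\<lambda>x. x)" by (auto simp: Lword_star_def)
  thus ?case using star_poly_id[OF assms] by simp
next
  case (Cons j b)
  have "(\<lambda>x. Lword_star b (Lstar j x)) \<in> star_poly d"
    using Cons by (intro star_poly.mult[OF _ star_poly.gen_Lstar]) auto
  moreover have "(\<lambda>x. Lword_star b (Lstar j x)) = Lword_star (j # b)"
    by (auto simp: Lword_star_def Lstar_def fun_eq_iff)
  ultimately show ?case by simp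
qed

lemma star_poly_vacuum_proj:
  assumes d: "1 \<le> d" shows "vacuum_proj d \<in> star_poly d"
proof -
  have "(\<lambda>x. Lop j (Lstar j x)) \<in> star_poly d" if "j \<in> {1..d}" for j
    by (rule star_poly.mult[OF star_poly.gen_L[OF that] star_poly.gen_Lstar[OF that]])
  hence "(\<lambda>x w. \<Sum>j\<in>{1..d}. Lop j (Lstar j x) w) \<in> star_poly d"
    using star_poly_sum[OF d, of "{1..d}" "\<lambda>j x. Lop j (Lstar j x)"] by simp
  hence "(\<lambda>x w. (-1) * (\<Sum>j\<in>{1..d}. Lop j (Lstar j x) w)) \<in> star_poly d"
    by (rule star_poly.smult)
  hence "(\<lambda>x w. x w + (-1) * (\<Sum>j\<in>{1..d}. Lop j (Lstar j x) w)) \<in> star_poly d"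
    by (rule star_poly.add[OF star_poly_id[OF d], simplified])
  moreover have "(\<lambda>x w. x w + (-1) * (\<Sum>j\<in>{1..d}. Lop j (Lstar j x) w)) = vacuum_proj d"
    by (simp add: vacuum_proj_def fun_eq_iff)
  ultimately show ?thesis by simp
qed

lemma vacuum_proj_apply:
  assumes "\<And>w. w \<notin> fock_words d \<Longrightarrow> x w = 0"
  shows "vacuum_proj d x w = (if w = [] then x [] else 0)"
proof (cases w)
  case (Cons c r)
  have "(\<Sum>j\<in>{1..d}. Lop j (Lstar j x) w) = (if c \<in> {1..d} then x w else 0)"
    using Cons by (simp add: Lop_def Lstar_def if_distrib cong: if_cong)
  moreover have "c \<notin> {1..d} \<Longrightarrow> x w = 0" using assms Cons by (auto simp: fock_words_def)
  ultimately show ?thesis using Cons by (auto simp: vacuum_proj_def)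
qed (simp add: vacuum_proj_def Lop_def)

lemma Lword_vacuum_proj_Lword_star:
  assumes "x \<in> ell2 d"
  shows "Lword v (vacuum_proj d (Lword_star u x)) w = (if w = v then x u else 0)"
proof -
  have "Lword_star u x r = 0" if "r \<notin> fock_words d" for r
    using assms that by (auto simp: Lword_star_def ell2_def fock_words_def)
  hence "vacuum_proj d (Lword_star u x) r = (if r = [] then x u else 0)" for r
    by (simp add: vacuum_proj_apply Lword_star_def)
  moreover have "(take (length v) w = v \<and> drop (length v) w = []) \<longleftrightarrow> w = v"
    by (metis append_take_drop_id append_Nil2 drop_all nat_le_linear take_all)
  ultimately show ?thesis unfolding Lword_def by auto
qed

subsection \<open>Graded operators\<close>

definition shift_deg :: "bool \<Rightarrow> nat \<Rightarrow> nat \<Rightarrow> nat" where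
  "shift_deg up k n = (if up then n + k else n - k)"

definition source_deg :: "bool \<Rightarrow> nat \<Rightarrow> nat \<Rightarrow> nat" where
  "source_deg up k n = (if up then n - k else n + k)"

lemma shift_source_deg: "(up \<longrightarrow> k \<le> n) \<Longrightarrow> shift_deg up k (source_deg up k n) = n"
  by (auto simp: shift_deg_def source_deg_def)

definition comm_Rstar :: "fock_op \<Rightarrow> nat \<Rightarrow> fock_op" where
  "comm_Rstar T j x = (\<lambda>w. T (Rstar j x) w - Rstar j (T x) w)"

definition short_words :: "nat \<Rightarrow> nat \<Rightarrow> nat list set" where
  "short_words d m = {u. length u < m \<and> set u \<subseteq> {1..d}}"

lemma finite_short_words: "finite (short_words d m)"
proof -
  have "short_words d m \<subseteq> {u. set u \<subseteq> {1..d} \<and> length u \<le> m}"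
    unfolding short_words_def by auto
  thus ?thesis using finite_lists_length_le[of "{1..d}" m] finite_subset by blast
qed

text \<open>\<open>up\<close> selects raising (\<open>n \<mapsto> n + k\<close>) or lowering (\<open>n \<mapsto> n - k\<close>); a lowering operator
  kills \<open>F\<^sub>n\<close> for \<open>n < k\<close>, which the second conjunct records.\<close>

locale graded_op =
  fixes d k :: nat and T :: fock_op and up :: bool
  assumes bounded: "bounded_op d T"
    and graded: "\<And>n y w. y \<in> deg_space d n \<Longrightarrow> T y w \<noteq> 0 \<Longrightarrow>
                   length w = shift_deg up k n \<and> (up \<or> k \<le> n)"
begin

lemma T_eq_on_source_deg_part:
  assumes x: "x \<in> ell2 d" and w: "up \<longrightarrow> k \<le> length w"
  shows "T x w = T (deg_part (source_deg up k (length w)) x) w"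
proof (rule bounded_op_eq_on_deg_part[OF bounded x])
  fix j y assume j: "j \<noteq> source_deg up k (length w)" and y: "y \<in> deg_space d j"
  show "T y w = 0"
  proof (rule ccontr)
    assume "T y w \<noteq> 0"
    hence "length w = shift_deg up k j \<and> (up \<or> k \<le> j)" by (rule graded[OF y])
    thus False using j w by (cases up) (auto simp: shift_deg_def source_deg_def)
  qed
qed

lemma T_vanishes_below:
  assumes x: "x \<in> ell2 d" and "up" "length w < k"
  shows "T x w = 0"
proof -
  have kills: "T y w = 0" if "y \<in> deg_space d j" for j y
  proof (rule ccontr)
    assume "T y w \<noteq> 0"
    thus False using graded[OF that] assms by (auto simp: shift_deg_def)
  qed
  have "T x w = T (deg_part 0 x) w" by (rule bounded_op_eq_on_deg_part[OF bounded x kills])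
  thus ?thesis using kills[OF deg_part_in_deg_space[OF x]] by simp
qed

definition coeff :: "nat list \<Rightarrow> nat list \<Rightarrow> complex" where
  "coeff u v = T (basis_vec u) v"

lemma coeff_nonzero:
  assumes "u \<in> fock_words d" "coeff u v \<noteq> 0"
  shows "length v = shift_deg up k (length u)" "up \<or> k \<le> length u" "v \<in> fock_words d"
proof -
  have u: "basis_vec u \<in> deg_space d (length u)"
    by (rule basis_vec_in_deg_space[OF fock_words_in_words_of_len[OF assms(1)]])
  show "length v = shift_deg up k (length u)" "up \<or> k \<le> length u"
    using graded[OF u] assms(2) unfolding coeff_def by blast+
  show "v \<in> fock_words d"
    using bounded_op_ell2[OF bounded, of "basis_vec u"] u assms(2)
    by (auto simp: coeff_def deg_space_def ell2_def)
qed

definition comm_norm :: "nat \<Rightarrow> real" where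
  "comm_norm n = (\<Sum>j\<in>{1..d}. opnorm_on (deg_space d n) (comm_Rstar T j))"

definition source_sqnorm :: "fock_vec \<Rightarrow> nat \<Rightarrow> real" where
  "source_sqnorm x l = (if up \<and> l < k then 0 else deg_sqnorm d x (source_deg up k l))"

lemma source_sqnorm_summable:
  assumes x: "x \<in> ell2 d"
  shows "summable (source_sqnorm x)" "suminf (source_sqnorm x) \<le> (fnorm x)\<^sup>2"
proof -
  let ?h = "source_sqnorm x"
  have x_sums: "deg_sqnorm d x sums (fnorm x)\<^sup>2" by (rule deg_sqnorm_sums[OF x])
  have "summable ?h \<and> suminf ?h \<le> (fnorm x)\<^sup>2"
  proof (cases up)
    case True
    have "(\<lambda>l. ?h (l + k)) = deg_sqnorm d x"
      unfolding source_sqnorm_def using True by (auto simp: source_deg_def)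
    hence "?h sums ((fnorm x)\<^sup>2 + (\<Sum>l<k. ?h l))"
      using x_sums sums_iff_shift[of ?h k] by simp
    moreover have "(\<Sum>l<k. ?h l) = 0" unfolding source_sqnorm_def using True by simp
    ultimately show ?thesis by (simp add: sums_iff)
  next
    case False
    have "?h = (\<lambda>l. deg_sqnorm d x (l + k))"
      unfolding source_sqnorm_def using False by (auto simp: source_deg_def)
    moreover have "(\<lambda>l. deg_sqnorm d x (l + k)) sums ((fnorm x)\<^sup>2 - (\<Sum>l<k. deg_sqnorm d x l))"
      by (rule sums_split_initial_segment[OF x_sums])
    moreover have "(\<Sum>l<k. deg_sqnorm d x l) \<ge> 0" by (simp add: sum_nonneg deg_sqnorm_nonneg)
    ultimately show ?thesis by (auto simp: sums_iff)
  qed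
  thus "summable ?h" "suminf ?h \<le> (fnorm x)\<^sup>2" by auto
qed

end

text \<open>\<open>low_part\<close> is the compression of \<open>T\<close> to the degrees below \<open>m\<close>, written with the matrix
  units \<open>L\<^sub>v P\<^sub>\<Omega> L\<^sub>u\<^sup>*\<close>; \<open>high_part = \<Sum> \<langle>T e\<^sub>b, e\<^sub>a\<rangle> L\<^sub>a L\<^sub>b\<^sup>*\<close> with \<open>|b| = m\<close>.\<close>

locale graded_op_approx = graded_op +
  fixes m :: nat
  assumes d_pos: "1 \<le> d" and k_le_m: "k \<le> m"
    and comm_bounded: "\<And>j. j \<in> {1..d} \<Longrightarrow> bounded_op d (comm_Rstar T j)"
begin

abbreviation m' :: nat where "m' \<equiv> shift_deg up k m"

definition low_part :: fock_op where
  "low_part x w = (\<Sum>u\<in>short_words d m. \<Sum>v\<in>short_words d (m + k + 1).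
      coeff u v * Lword v (vacuum_proj d (Lword_star u x)) w)"

definition high_part :: fock_op where
  "high_part x w = (\<Sum>a\<in>words_of_len d m'. \<Sum>b\<in>words_of_len d m. coeff b a * Lword a (Lword_star b x) w)"

definition approx :: fock_op where
  "approx x w = low_part x w + high_part x w"

definition err :: fock_op where
  "err x w = T x w - approx x w"

definition err_bound :: "nat \<Rightarrow> real" where
  "err_bound n = (\<Sum>l\<in>{m<..n}. comm_norm l)"

lemma star_poly_approx: "approx \<in> star_poly d"
proof -
  have low: "(\<lambda>x w. coeff u v * Lword v (vacuum_proj d (Lword_star u x)) w) \<in> star_poly d"
    if "u \<in> short_words d m" "v \<in> short_words d (m + k + 1)" for u v
  proof -
    have "set u \<subseteq> {1..d}" "set v \<subseteq> {1..d}" using that by (auto simp: short_words_def)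
    hence "(\<lambda>x. Lword v (vacuum_proj d (Lword_star u x))) \<in> star_poly d"
      by (intro star_poly.mult[OF star_poly_Lword[OF d_pos]]
            star_poly.mult[OF star_poly_vacuum_proj[OF d_pos] star_poly_Lword_star[OF d_pos]])
    thus ?thesis by (rule star_poly.smult)
  qed
  have high: "(\<lambda>x w. coeff b a * Lword a (Lword_star b x) w) \<in> star_poly d"
    if "a \<in> words_of_len d m'" "b \<in> words_of_len d m" for a b
  proof -
    have "set a \<subseteq> {1..d}" "set b \<subseteq> {1..d}" using that by (auto simp: words_of_len_def)
    hence "(\<lambda>x. Lword a (Lword_star b x)) \<in> star_poly d"
      by (intro star_poly.mult[OF star_poly_Lword[OF d_pos] star_poly_Lword_star[OF d_pos]])
    thus ?thesis by (rule star_poly.smult)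
  qed
  have "low_part \<in> star_poly d"
    unfolding low_part_def[abs_def]
    by (intro star_poly_sum[OF d_pos] finite_short_words low)
  moreover have "high_part \<in> star_poly d"
    unfolding high_part_def[abs_def]
    by (intro star_poly_sum[OF d_pos] finite_words_of_len high)
  ultimately show ?thesis
    unfolding approx_def[abs_def] by (rule star_poly.add)
qed

lemma low_part_eq:
  assumes x: "x \<in> ell2 d"
  shows "low_part x w = (\<Sum>u\<in>short_words d m. x u * coeff u w)"
proof -
  have "(\<Sum>v\<in>short_words d (m + k + 1). coeff u v * (if w = v then x u else 0)) = x u * coeff u w"
    if u: "u \<in> short_words d m" for u
  proof (cases "coeff u w = 0")
    case False
    have "u \<in> fock_words d" using u by (auto simp: short_words_def fock_words_def)
    hence "w \<in> short_words d (m + k + 1)"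
      using coeff_nonzero[OF _ False] u by (auto simp: short_words_def shift_deg_def fock_words_def)
    thus ?thesis by (simp add: finite_short_words if_distrib cong: if_cong)
  qed (auto intro!: sum.neutral)
  thus ?thesis unfolding low_part_def Lword_vacuum_proj_Lword_star[OF x] by simp
qed

lemma high_part_eq:
  "high_part x w = (\<Sum>a\<in>words_of_len d m'. \<Sum>b\<in>words_of_len d m.
      coeff b a * (if take m' w = a then x (b @ drop m' w) else 0))"
  unfolding high_part_def Lword_def Lword_star_def
  by (intro sum.cong refl) (auto simp: words_of_len_def)

lemma low_part_above:
  assumes y: "y \<in> deg_space d n" and "m \<le> n"
  shows "low_part y w = 0"
proof -
  have "y u = 0" if "u \<in> short_words d m" for u
    using that assms deg_space_vanishes[OF y] by (auto simp: short_words_def words_of_len_def)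
  thus ?thesis using y by (simp add: low_part_eq deg_space_def)
qed

lemma approx_below:
  assumes y: "y \<in> deg_space d n" and "n < m"
  shows "approx y w = T y w"
proof -
  have "high_part y w = 0" unfolding high_part_eq
  proof (intro sum.neutral ballI)
    fix a b assume "b \<in> words_of_len d m"
    hence "b @ drop m' w \<notin> words_of_len d n" using \<open>n < m\<close> by (auto simp: words_of_len_def)
    thus "coeff b a * (if take m' w = a then y (b @ drop m' w) else 0) = 0"
      using deg_space_vanishes[OF y] by simp
  qed
  moreover have "(\<Sum>u\<in>short_words d m. y u * coeff u w) = (\<Sum>u\<in>words_of_len d n. y u * coeff u w)"
    by (rule sum.mono_neutral_right[OF finite_short_words])
      (use assms deg_space_vanishes[OF y] in \<open>auto simp: short_words_def words_of_len_def\<close>)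
  ultimately show ?thesis
    using y bounded_op_deg_space_expansion[OF bounded y]
    by (simp add: approx_def low_part_eq deg_space_def coeff_def)
qed

lemma high_part_deg_m:
  assumes y: "y \<in> deg_space d m"
  shows "high_part y w = T y w"
proof (cases "w \<in> words_of_len d m'")
  case True
  have "high_part y w = (\<Sum>a\<in>words_of_len d m'. if w = a then \<Sum>b\<in>words_of_len d m. coeff b a * y b else 0)"
    unfolding high_part_eq using True
    by (intro sum.cong refl) (auto simp: words_of_len_def intro!: sum.neutral)
  also have "\<dots> = (\<Sum>b\<in>words_of_len d m. y b * coeff b w)"
    using True by (simp add: finite_words_of_len mult.commute)
  also have "\<dots> = T y w"
    unfolding coeff_def by (rule bounded_op_deg_space_expansion[OF bounded y, symmetric])
  finally show ?thesis .
next
  case False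
  have "T y w = 0"
  proof (rule ccontr)
    assume "T y w \<noteq> 0"
    moreover from this have "w \<in> fock_words d"
      using bounded_op_ell2[OF bounded] y by (auto simp: deg_space_def ell2_def)
    ultimately show False using graded[OF y] False fock_words_in_words_of_len by fastforce
  qed
  moreover have "high_part y w = 0" unfolding high_part_eq
  proof (intro sum.neutral ballI)
    fix a b assume a: "a \<in> words_of_len d m'" and b: "b \<in> words_of_len d m"
    show "coeff b a * (if take m' w = a then y (b @ drop m' w) else 0) = 0"
    proof (cases "take m' w = a")
      case True
      have "drop m' w \<noteq> []"
        using True a False by (metis append_Nil2 append_take_drop_id)
      hence "b @ drop m' w \<notin> words_of_len d m" using b by (auto simp: words_of_len_def)
      thus ?thesis using deg_space_vanishes[OF y] by simp
    qed simp
  qed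
  ultimately show ?thesis by simp
qed

lemma high_part_Rstar:
  assumes y: "y \<in> deg_space d (Suc n)" and "m \<le> n"
  shows "high_part y (w @ [i]) = high_part (Rstar i y) w"
  unfolding high_part_eq
proof (intro sum.cong refl)
  fix a b assume a: "a \<in> words_of_len d m'" and b: "b \<in> words_of_len d m"
  show "coeff b a * (if take m' (w @ [i]) = a then y (b @ drop m' (w @ [i])) else 0) =
        coeff b a * (if take m' w = a then Rstar i y (b @ drop m' w) else 0)"
  proof (cases "m' \<le> length w")
    case False
    hence "take m' w \<noteq> a" "drop m' (w @ [i]) = []" using a by (auto simp: words_of_len_def)
    moreover have "b \<notin> words_of_len d (Suc n)" using b \<open>m \<le> n\<close> by (auto simp: words_of_len_def)
    moreover have "length a = m'" using a by (simp add: words_of_len_def)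
    ultimately show ?thesis using deg_space_vanishes[OF y, of b] by auto
  qed (simp add: Rstar_def)
qed

lemma err_below: "y \<in> deg_space d n \<Longrightarrow> n < m \<Longrightarrow> err y w = 0"
  unfolding err_def using approx_below by simp

lemma err_deg_m: "y \<in> deg_space d m \<Longrightarrow> err y w = 0"
  unfolding err_def approx_def using low_part_above high_part_deg_m by simp

lemma err_snoc:
  assumes y: "y \<in> deg_space d (Suc n)" and "m \<le> n" and i: "i \<in> {1..d}"
  shows "err y (w @ [i]) = err (Rstar i y) w - comm_Rstar T i y w"
proof -
  have "approx y (w @ [i]) = approx (Rstar i y) w"
    using assms low_part_above[OF y] low_part_above[OF Rstar_in_deg_space[OF y i]]
      high_part_Rstar[OF y] by (simp add: approx_def)
  thus ?thesis unfolding err_def comm_Rstar_def by (simp add: Rstar_def)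
qed

lemma comm_norm_nonneg: "comm_norm n \<ge> 0"
  unfolding comm_norm_def using opnorm_on_deg_space_nonneg[OF comm_bounded]
  by (auto intro: sum_nonneg)

lemma err_bound_nonneg: "err_bound n \<ge> 0"
  unfolding err_bound_def using comm_norm_nonneg by (auto intro: sum_nonneg)

lemma err_bound_Suc: "m \<le> n \<Longrightarrow> err_bound (Suc n) = err_bound n + comm_norm (Suc n)"
proof -
  assume "m \<le> n"
  hence "{m<..Suc n} = insert (Suc n) {m<..n}" by auto
  thus ?thesis unfolding err_bound_def by simp
qed

lemma sqrt_sum_deg_sqnorm_comm_le:
  assumes y: "y \<in> deg_space d n"
  shows "sqrt (\<Sum>i\<in>{1..d}. deg_sqnorm d (comm_Rstar T i y) l) \<le> comm_norm n * fnorm y"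
proof -
  let ?norm = "\<lambda>i. opnorm_on (deg_space d n) (comm_Rstar T i) * fnorm y"
  have "deg_sqnorm d (comm_Rstar T i y) l \<le> (?norm i)\<^sup>2" if i: "i \<in> {1..d}" for i
  proof -
    have "deg_sqnorm d (comm_Rstar T i y) l \<le> (fnorm (comm_Rstar T i y))\<^sup>2"
      using bounded_op_ell2[OF comm_bounded[OF i]] y
      by (intro deg_sqnorm_le_fnorm_squared) (auto simp: deg_space_def)
    also have "\<dots> \<le> (?norm i)\<^sup>2"
      by (intro power_mono fnorm_le_opnorm_on_deg_space[OF comm_bounded[OF i] y] fnorm_nonneg)
    finally show ?thesis .
  qed
  hence "sqrt (\<Sum>i\<in>{1..d}. deg_sqnorm d (comm_Rstar T i y) l) \<le> L2_set ?norm {1..d}"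
    unfolding L2_set_def by (intro real_sqrt_le_mono sum_mono)
  also have "\<dots> \<le> (\<Sum>i\<in>{1..d}. ?norm i)"
    using opnorm_on_deg_space_nonneg[OF comm_bounded] fnorm_nonneg
    by (intro L2_set_le_sum) auto
  finally show ?thesis by (simp add: comm_norm_def sum_distrib_right)
qed

lemma err_deg_sqnorm_le:
  assumes "m \<le> n" "y \<in> deg_space d n"
  shows "sqrt (deg_sqnorm d (err y) (shift_deg up k n)) \<le> err_bound n * fnorm y"
  using assms
proof (induction n arbitrary: y rule: dec_induct)
  case base
  thus ?case
    using err_deg_m[OF base] err_bound_nonneg[of m] fnorm_nonneg[of y] by (simp add: deg_sqnorm_def)
next
  case (step n)
  let ?l = "shift_deg up k n"
  have shift_Suc: "shift_deg up k (Suc n) = Suc ?l"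
    using step.hyps k_le_m by (auto simp: shift_deg_def)
  have "sqrt (deg_sqnorm d (err y) (shift_deg up k (Suc n)))
      = sqrt (\<Sum>i\<in>{1..d}. \<Sum>w\<in>words_of_len d ?l. (cmod (err (Rstar i y) w - comm_Rstar T i y w))\<^sup>2)"
    unfolding shift_Suc deg_sqnorm_Suc
    using err_snoc[OF step.prems step.hyps(1)] by (simp add: deg_sqnorm_def)
  also have "\<dots> \<le> sqrt (\<Sum>i\<in>{1..d}. deg_sqnorm d (err (Rstar i y)) ?l)
                 + sqrt (\<Sum>i\<in>{1..d}. deg_sqnorm d (comm_Rstar T i y) ?l)"
    unfolding deg_sqnorm_def by (rule sqrt_double_sum_diff_le)
  also have "sqrt (\<Sum>i\<in>{1..d}. deg_sqnorm d (err (Rstar i y)) ?l) \<le> err_bound n * fnorm y"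
    by (rule sqrt_sum_deg_sqnorm_Rstar_le[OF step.prems err_bound_nonneg step.IH])
  also have "sqrt (\<Sum>i\<in>{1..d}. deg_sqnorm d (comm_Rstar T i y) ?l) \<le> comm_norm (Suc n) * fnorm y"
    by (rule sqrt_sum_deg_sqnorm_comm_le[OF step.prems])
  finally show ?case by (simp add: err_bound_Suc[OF step.hyps(1)] algebra_simps)
qed

lemma approx_eq_on_source_deg_part:
  assumes x: "x \<in> ell2 d" and w: "up \<longrightarrow> k \<le> length w"
  shows "approx x w = approx (deg_part (source_deg up k (length w)) x) w"
proof -
  let ?n = "source_deg up k (length w)"
  have x_n: "deg_part ?n x \<in> ell2 d" using deg_part_in_deg_space[OF x] by (simp add: deg_space_def)
  have "x u * coeff u w = deg_part ?n x u * coeff u w" if u: "u \<in> short_words d m" for u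
  proof (cases "coeff u w = 0")
    case False
    have "u \<in> fock_words d" using u by (auto simp: short_words_def fock_words_def)
    hence "length u = ?n" using coeff_nonzero[OF _ False] w by (auto simp: shift_deg_def source_deg_def)
    thus ?thesis by (simp add: deg_part_def)
  qed simp
  hence "(\<Sum>u\<in>short_words d m. x u * coeff u w) = (\<Sum>u\<in>short_words d m. deg_part ?n x u * coeff u w)"
    by (rule sum.cong[OF refl])
  hence "low_part x w = low_part (deg_part ?n x) w" by (simp add: low_part_eq[OF x] low_part_eq[OF x_n])
  moreover have "high_part x w = high_part (deg_part ?n x) w"
    unfolding high_part_eq
  proof (intro sum.cong refl)
    fix a b assume a: "a \<in> words_of_len d m'" and b: "b \<in> words_of_len d m"
    show "coeff b a * (if take m' w = a then x (b @ drop m' w) else 0) =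
          coeff b a * (if take m' w = a then deg_part ?n x (b @ drop m' w) else 0)"
    proof (cases "take m' w = a")
      case True
      hence "m' \<le> length w" using a by (auto simp: words_of_len_def)
      hence "length (b @ drop m' w) = ?n"
        using b k_le_m by (auto simp: words_of_len_def shift_deg_def source_deg_def)
      thus ?thesis by (simp add: deg_part_def)
    qed simp
  qed
  ultimately show ?thesis by (simp add: approx_def)
qed

lemma approx_vanishes_below:
  assumes x: "x \<in> ell2 d" and "up" "length w < k"
  shows "approx x w = 0"
proof -
  have "coeff u w = 0" if "u \<in> short_words d m" for u
    using that assms coeff_nonzero(1)[of u w] by (force simp: short_words_def fock_words_def shift_deg_def)
  hence "low_part x w = 0" by (simp add: low_part_eq[OF x])
  moreover have "take m' w \<noteq> a" if "a \<in> words_of_len d m'" for a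
    using that assms by (auto simp: words_of_len_def shift_deg_def)
  hence "high_part x w = 0" unfolding high_part_eq by (intro sum.neutral ballI) simp
  ultimately show ?thesis by (simp add: approx_def)
qed

lemma approx_vanishes_off_fock_words:
  assumes x: "x \<in> ell2 d" and w: "w \<notin> fock_words d"
  shows "approx x w = 0"
proof -
  have "coeff u w = 0" if "u \<in> short_words d m" for u
    using that w coeff_nonzero(3)[of u w] by (auto simp: short_words_def fock_words_def)
  hence "low_part x w = 0" by (simp add: low_part_eq[OF x])
  moreover have "high_part x w = 0" unfolding high_part_eq
  proof (intro sum.neutral ballI)
    fix a b assume a: "a \<in> words_of_len d m'"
    show "coeff b a * (if take m' w = a then x (b @ drop m' w) else 0) = 0"
    proof (cases "take m' w = a")
      case True
      have "set w \<subseteq> set a \<union> set (drop m' w)"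
        by (metis True append_take_drop_id set_append subset_refl)
      hence "b @ drop m' w \<notin> fock_words d" using w a by (auto simp: fock_words_def words_of_len_def)
      thus ?thesis using x by (simp add: ell2_def)
    qed simp
  qed
  ultimately show ?thesis by (simp add: approx_def)
qed

lemma err_eq_on_source_deg_part:
  assumes "x \<in> ell2 d" "up \<longrightarrow> k \<le> length w"
  shows "err x w = err (deg_part (source_deg up k (length w)) x) w"
  unfolding err_def
  by (simp only: T_eq_on_source_deg_part[OF assms] approx_eq_on_source_deg_part[OF assms])

lemma err_vanishes_below: "x \<in> ell2 d \<Longrightarrow> up \<Longrightarrow> length w < k \<Longrightarrow> err x w = 0"
  unfolding err_def using T_vanishes_below approx_vanishes_below by simp

lemma err_vanishes_off_fock_words:
  assumes x: "x \<in> ell2 d" and w: "w \<notin> fock_words d"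
  shows "err x w = 0"
proof -
  have "T x w = 0" using bounded_op_ell2[OF bounded x] w by (simp add: ell2_def)
  thus ?thesis unfolding err_def using approx_vanishes_off_fock_words[OF x w] by simp
qed

lemma deg_sqnorm_err_deg_space_le:
  assumes c: "\<And>n. err_bound n \<le> c" and y: "y \<in> deg_space d n"
  shows "deg_sqnorm d (err y) (shift_deg up k n) \<le> c\<^sup>2 * deg_sqnorm d y n"
proof -
  have "deg_sqnorm d (err y) (shift_deg up k n) \<le> (err_bound n * fnorm y)\<^sup>2"
  proof (cases "m \<le> n")
    case True
    thus ?thesis using power_mono[OF err_deg_sqnorm_le[OF True y], of 2]
      by (simp add: deg_sqnorm_nonneg)
  qed (simp add: err_below[OF y] deg_sqnorm_def)
  also have "\<dots> \<le> (c * fnorm y)\<^sup>2"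
    by (intro power_mono mult_right_mono c) (simp_all add: err_bound_nonneg fnorm_nonneg)
  also have "\<dots> = c\<^sup>2 * deg_sqnorm d y n"
    by (simp add: power_mult_distrib fnorm_deg_space[OF y] deg_sqnorm_nonneg)
  finally show ?thesis .
qed

lemma deg_sqnorm_err_le:
  assumes c: "\<And>n. err_bound n \<le> c" and x: "x \<in> ell2 d"
  shows "deg_sqnorm d (err x) l \<le> c\<^sup>2 * source_sqnorm x l"
proof (cases "up \<and> l < k")
  case True
  have "err x w = 0" if "w \<in> words_of_len d l" for w
    using that True err_vanishes_below[OF x] by (simp add: words_of_len_def)
  hence "deg_sqnorm d (err x) l = 0" by (simp add: deg_sqnorm_def)
  moreover have "source_sqnorm x l = 0" unfolding source_sqnorm_def using True by simp
  ultimately show ?thesis by simp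
next
  case False
  define n where "n = source_deg up k l"
  have l: "shift_deg up k n = l" unfolding n_def by (rule shift_source_deg) (use False in auto)
  have "err x w = err (deg_part n x) w" if "w \<in> words_of_len d l" for w
    using that False err_eq_on_source_deg_part[OF x, of w] by (auto simp: n_def words_of_len_def)
  hence "deg_sqnorm d (err x) l = deg_sqnorm d (err (deg_part n x)) (shift_deg up k n)"
    unfolding deg_sqnorm_def l by simp
  also have "\<dots> \<le> c\<^sup>2 * deg_sqnorm d (deg_part n x) n"
    by (rule deg_sqnorm_err_deg_space_le[OF c deg_part_in_deg_space[OF x]])
  also have "deg_sqnorm d (deg_part n x) n = deg_sqnorm d x n"
    unfolding deg_sqnorm_def by (intro sum.cong refl) (simp add: deg_part_def words_of_len_def)
  also have "\<dots> = source_sqnorm x l" unfolding source_sqnorm_def n_def using False by presburger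
  finally show ?thesis .
qed

lemma err_fnorm_le:
  assumes c: "\<And>n. err_bound n \<le> c" and x: "x \<in> ell2 d"
  shows "fnorm (err x) \<le> c * fnorm x"
proof -
  note h = source_sqnorm_summable[OF x]
  have "(fnorm (err x))\<^sup>2 \<le> (\<Sum>l. c\<^sup>2 * source_sqnorm x l)"
    by (rule fnorm_squared_le_suminf)
      (use err_vanishes_off_fock_words[OF x] deg_sqnorm_err_le[OF c x] summable_mult[OF h(1)] in auto)
  also have "\<dots> = c\<^sup>2 * suminf (source_sqnorm x)" by (rule suminf_mult[OF h(1)])
  also have "\<dots> \<le> c\<^sup>2 * (fnorm x)\<^sup>2" by (rule mult_left_mono[OF h(2)]) simp
  also have "\<dots> = (c * fnorm x)\<^sup>2" by (simp add: power_mult_distrib)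
  finally show ?thesis
    by (rule power2_le_imp_le) (use c[of 0] err_bound_nonneg[of 0] fnorm_nonneg in auto)
qed

lemma opnorm_err_le:
  assumes "\<And>n. err_bound n \<le> c" and "c \<ge> 0"
  shows "opnorm d err \<le> c"
  unfolding opnorm_def opnorm_on_def
proof (rule cSup_least)
  have "(\<lambda>w. 0) \<in> {x \<in> ell2 d. fnorm x \<le> 1}" using ell2_zero[of d] by simp
  thus "(\<lambda>x. fnorm (err x)) ` {x \<in> ell2 d. fnorm x \<le> 1} \<noteq> {}" by blast
next
  fix r assume "r \<in> (\<lambda>x. fnorm (err x)) ` {x \<in> ell2 d. fnorm x \<le> 1}"
  then obtain x where x: "x \<in> ell2 d" "fnorm x \<le> 1" and r: "r = fnorm (err x)" by auto
  have "r \<le> c * fnorm x" using err_fnorm_le[OF assms(1) x(1)] r by simp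
  also have "\<dots> \<le> c" using assms(2) x(2) mult_left_mono[of "fnorm x" 1 c] by simp
  finally show "r \<le> c" .
qed

lemma opnorm_T_minus_approx_le:
  assumes "summable comm_norm"
  shows "opnorm d (\<lambda>x w. T x w - approx x w) \<le> (\<Sum>i. comm_norm (i + Suc m))"
proof -
  have tail: "summable (\<lambda>i. comm_norm (i + Suc m))"
    by (rule summable_iff_shift[THEN iffD2, OF assms])
  have tail_nonneg: "(\<Sum>i. comm_norm (i + Suc m)) \<ge> 0"
    by (rule suminf_nonneg[OF tail comm_norm_nonneg])
  have "err_bound n \<le> (\<Sum>i. comm_norm (i + Suc m))" for n
  proof (cases "n \<le> m")
    case True
    thus ?thesis using tail_nonneg by (simp add: err_bound_def)
  next
    case False
    have "err_bound n = (\<Sum>i<n - m. comm_norm (i + Suc m))"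
      unfolding err_bound_def
      by (rule sum.reindex_bij_witness[of _ "\<lambda>i. i + Suc m" "\<lambda>l. l - Suc m"]) (use False in auto)
    also have "\<dots> \<le> (\<Sum>i. comm_norm (i + Suc m))"
      by (rule sum_le_suminf[OF tail]) (auto simp: comm_norm_nonneg)
    finally show ?thesis .
  qed
  moreover have "(\<lambda>x w. T x w - approx x w) = err" by (simp add: err_def[abs_def])
  ultimately show ?thesis using opnorm_err_le tail_nonneg by simp
qed

end

lemma (in graded_op) in_cuntz_toeplitz:
  assumes d: "1 \<le> d" and comm: "\<And>j. j \<in> {1..d} \<Longrightarrow> class_S d (comm_Rstar T j)"
  shows "T \<in> cuntz_toeplitz d"
  unfolding cuntz_toeplitz_def
proof (intro CollectI conjI bounded allI impI)
  fix \<epsilon> :: real assume "\<epsilon> > 0"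
  have comm_bounded: "bounded_op d (comm_Rstar T j)" if "j \<in> {1..d}" for j
    using comm[OF that] by (simp add: class_S_def)
  have summable: "summable comm_norm"
    unfolding comm_norm_def[abs_def] using comm by (intro summable_sum) (simp add: class_S_def)
  obtain N where N: "\<And>n. n \<ge> N \<Longrightarrow> norm (\<Sum>i. comm_norm (i + n)) < \<epsilon>"
    using suminf_exist_split[OF \<open>\<epsilon> > 0\<close> summable] by blast
  interpret graded_op_approx d k T up "max k N"
    using d comm_bounded by unfold_locales auto
  have "opnorm d (\<lambda>x w. T x w - approx x w) \<le> (\<Sum>i. comm_norm (i + Suc (max k N)))"
    by (rule opnorm_T_minus_approx_le[OF summable])
  also have "\<dots> \<le> norm (\<Sum>i. comm_norm (i + Suc (max k N)))" by simp
  also have "\<dots> < \<epsilon>" by (rule N) simp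
  finally show "\<exists>P\<in>star_poly d. opnorm d (\<lambda>x w. T x w - P x w) < \<epsilon>"
    using star_poly_approx by blast
qed

lemma graded_op_if_raising_or_lowering:
  assumes bounded: "bounded_op d T" and "raising d k T \<or> lowering d k T"
  shows "graded_op d k T (raising d k T)"
proof
  fix n y w assume y: "y \<in> deg_space d n" and "T y w \<noteq> 0"
  show "length w = shift_deg (raising d k T) k n \<and> (raising d k T \<or> k \<le> n)"
  proof (cases "raising d k T")
    case True
    hence "T y \<in> deg_space d (n + k)" using y unfolding raising_def by auto
    thus ?thesis using \<open>T y w \<noteq> 0\<close> True by (auto simp: deg_space_def shift_deg_def)
  next
    case False
    hence lowering: "lowering d k T" using assms(2) by auto
    show ?thesis
    proof (cases "k \<le> n")
      case True
      hence "T y \<in> deg_space d (n - k)" using lowering y unfolding lowering_def by auto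
      thus ?thesis using \<open>T y w \<noteq> 0\<close> True False by (auto simp: deg_space_def shift_deg_def)
    next
      case False
      hence "T y = (\<lambda>_. 0)" using lowering y unfolding lowering_def by auto
      thus ?thesis using \<open>T y w \<noteq> 0\<close> by simp
    qed
  qed
qed (rule bounded)

theorem proposition3p7:
  fixes d k :: nat and T :: fock_op
  assumes "d \<ge> 2"
    and "bounded_op d T"
    and "raising d k T \<or> lowering d k T"
    and "\<forall>j\<in>{1..d}. class_S d (\<lambda>x w. T (Rstar j x) w - Rstar j (T x) w)"
  shows "T \<in> cuntz_toeplitz d"
proof -
  interpret graded_op d k T "raising d k T"
    by (rule graded_op_if_raising_or_lowering[OF assms(2,3)])
  show ?thesis
    by (rule in_cuntz_toeplitz) (use assms(1,4) in \<open>auto simp: comm_Rstar_def[abs_def]\<close>)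
qed

end
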